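(* Let $G$ be a $3^*$-connected cubic graph of order $2n$ with $n\geq 4$. Then $\chi'_{[n-1]}(G)=4$.
   Context: All graphs are finite, simple (no loops, no parallel edges), connected and cubic. A bridgeless cubic graph $G$ is $3^*$-connected if there exist two vertices $a,b\in V(G)$ and three internally vertex-disjoint $a$–$b$ paths $Q_1,Q_2,Q_3$ with $V(G)=V(Q_1)\cup V(Q_2)\cup V(Q_3)$. For a positive integer $k$, a $[k]$-matching of $G$ is a matching of $G$ with exactly $k$ edges. The excessive $[k]$-index $\chi'_{[k]}(G)$ is the minimum number of $[k]$-matchings of $G$ whose union is $E(G)$; if some edge of $G$ lies in no $[k]$-matching, one sets $\chi'_{[k]}(G)=\infty$. *)

theory Defs
  imports Main "HOL-Library.Extended_Nat"
begin

definition simple_graph :: "'a set \<Rightarrow> 'a set set \<Rightarrow> bool" where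
  "simple_graph V E \<longleftrightarrow> finite V \<and>
     (\<forall>e\<in>E. \<exists>u v. e = {u, v} \<and> u \<noteq> v \<and> u \<in> V \<and> v \<in> V)"

definition degree :: "'a set set \<Rightarrow> 'a \<Rightarrow> nat" where
  "degree E v = card {e\<in>E. v \<in> e}"

definition cubic :: "'a set \<Rightarrow> 'a set set \<Rightarrow> bool" where
  "cubic V E \<longleftrightarrow> simple_graph V E \<and> (\<forall>v\<in>V. degree E v = 3)"

definition connected_graph :: "'a set \<Rightarrow> 'a set set \<Rightarrow> bool" where
  "connected_graph V E \<longleftrightarrow> (\<forall>u\<in>V. \<forall>v\<in>V. (\<lambda>x y. {x, y} \<in> E)\<^sup>*\<^sup>* u v)"

definition bridgeless :: "'a set \<Rightarrow> 'a set set \<Rightarrow> bool" where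
  "bridgeless V E \<longleftrightarrow> (\<forall>e\<in>E. connected_graph V (E - {e}))"

definition is_path :: "'a set set \<Rightarrow> 'a list \<Rightarrow> 'a \<Rightarrow> 'a \<Rightarrow> bool" where
  "is_path E xs a b \<longleftrightarrow> xs \<noteq> [] \<and> hd xs = a \<and> last xs = b \<and> distinct xs \<and>
     (\<forall>i. Suc i < length xs \<longrightarrow> {xs ! i, xs ! Suc i} \<in> E)"

definition three_star_connected :: "'a set \<Rightarrow> 'a set set \<Rightarrow> bool" where
  "three_star_connected V E \<longleftrightarrow> bridgeless V E \<and>
     (\<exists>a b Q1 Q2 Q3. a \<in> V \<and> b \<in> V \<and> a \<noteq> b \<and>
        is_path E Q1 a b \<and> is_path E Q2 a b \<and> is_path E Q3 a b \<and>
        Q1 \<noteq> Q2 \<and> Q1 \<noteq> Q3 \<and> Q2 \<noteq> Q3 \<and>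
        set Q1 \<inter> set Q2 = {a, b} \<and> set Q1 \<inter> set Q3 = {a, b} \<and> set Q2 \<inter> set Q3 = {a, b} \<and>
        V = set Q1 \<union> set Q2 \<union> set Q3)"

definition matching :: "'a set set \<Rightarrow> 'a set set \<Rightarrow> bool" where
  "matching E M \<longleftrightarrow> M \<subseteq> E \<and> (\<forall>e1\<in>M. \<forall>e2\<in>M. e1 \<noteq> e2 \<longrightarrow> e1 \<inter> e2 = {})"

definition k_matching :: "'a set set \<Rightarrow> nat \<Rightarrow> 'a set set \<Rightarrow> bool" where
  "k_matching E k M \<longleftrightarrow> matching E M \<and> card M = k"

text \<open>Excessive [k]-index: minimum number of [k]-matchings covering E; infinity
  (Inf of the empty set in enat) if no such cover exists.\<close>
definition excessive_index :: "'a set set \<Rightarrow> nat \<Rightarrow> enat" where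
  "excessive_index E k = Inf {enat (card S) | S. finite S \<and> (\<forall>M\<in>S. k_matching E k M) \<and> \<Union>S = E}"

end

theory Submission
  imports Defs
begin

text \<open>
  A cubic graph of order \<open>2n\<close> has \<open>3n\<close> edges, so three \<open>[n-1]\<close>-matchings never suffice.
  For four, take the theta subgraph formed by the three \<open>a\<close>-\<open>b\<close> paths: it spans all
  vertices and has \<open>2n + 1\<close> edges, so the remaining \<open>n - 1\<close> edges form a matching (every
  vertex already has degree at least two in the theta). The theta itself is the union of three
  \<open>[n-1]\<close>-matchings, built by taking alternate edges along each path; which alternate edges
  work depends only on the parities and smallness of the three path lengths \<open>l\<^sub>1 + l\<^sub>2 + l\<^sub>3 = 2n + 1\<close>,
  and is settled by a finite case distinction.
\<close>

subsection \<open>Covering three paths with matchings: the index combinatorics\<close>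

definition evens :: "nat \<Rightarrow> nat set" where "evens l = {j. j < l \<and> even j}"
definition odds :: "nat \<Rightarrow> nat set" where "odds l = {j. j < l \<and> odd j}"

lemma mem_evens [simp]: "j \<in> evens l \<longleftrightarrow> j < l \<and> even j"
  and mem_odds [simp]: "j \<in> odds l \<longleftrightarrow> j < l \<and> odd j"
  and finite_evens [simp]: "finite (evens l)" and finite_odds [simp]: "finite (odds l)"
  by (auto simp: evens_def odds_def)

lemma card_evens: "card (evens l) = (l + 1) div 2"
proof (induction l)
  case (Suc l)
  have "evens (Suc l) = (if even l then insert l (evens l) else evens l)"
    by (auto simp: less_Suc_eq)
  then show ?case using Suc by auto
qed (simp add: evens_def)

lemma card_odds: "card (odds l) = l div 2"
proof (induction l)
  case (Suc l)
  have "odds (Suc l) = (if odd l then insert l (odds l) else odds l)"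
    by (auto simp: less_Suc_eq)
  then show ?case using Suc by auto
qed (simp add: odds_def)

text \<open>Edges of a path with \<open>l\<close> edges are indexed by \<open>{..<l}\<close>; index sets without two consecutive
  indices correspond to matchings on the path.\<close>

definition spaced_indices :: "nat \<Rightarrow> nat set \<Rightarrow> bool" where
  "spaced_indices l S \<longleftrightarrow> S \<subseteq> {..<l} \<and> (\<forall>j\<in>S. Suc j \<notin> S)"

lemma spaced_indices_evens [simp]: "spaced_indices l (evens l)"
  and spaced_indices_odds [simp]: "spaced_indices l (odds l)"
  by (auto simp: spaced_indices_def)

lemma spaced_indices_Diff: "spaced_indices l S \<Longrightarrow> spaced_indices l (S - X)"
  by (auto simp: spaced_indices_def)

text \<open>The conditions on the indices \<open>0\<close> and \<open>l\<^sub>i - 1\<close> say that at most one of three paths with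
  common ends \<open>a\<close>, \<open>b\<close> contributes an edge at \<open>a\<close>, and at most one an edge at \<open>b\<close>.\<close>

definition theta_matching_indices ::
    "nat \<Rightarrow> nat \<Rightarrow> nat \<Rightarrow> nat \<Rightarrow> nat set \<Rightarrow> nat set \<Rightarrow> nat set \<Rightarrow> bool" where
  "theta_matching_indices l1 l2 l3 k A B C \<longleftrightarrow>
     spaced_indices l1 A \<and> spaced_indices l2 B \<and> spaced_indices l3 C \<and>
     card A + card B + card C = k \<and>
     \<not> (0 \<in> A \<and> 0 \<in> B) \<and> \<not> (0 \<in> A \<and> 0 \<in> C) \<and> \<not> (0 \<in> B \<and> 0 \<in> C) \<and>
     \<not> (l1 - 1 \<in> A \<and> l2 - 1 \<in> B) \<and> \<not> (l1 - 1 \<in> A \<and> l3 - 1 \<in> C) \<and>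
     \<not> (l2 - 1 \<in> B \<and> l3 - 1 \<in> C)"

definition theta_cover_scheme :: "nat \<Rightarrow> nat \<Rightarrow> nat \<Rightarrow> nat \<Rightarrow> bool" where
  "theta_cover_scheme l1 l2 l3 k \<longleftrightarrow> (\<exists>A1 B1 C1 A2 B2 C2 A3 B3 C3.
     theta_matching_indices l1 l2 l3 k A1 B1 C1 \<and>
     theta_matching_indices l1 l2 l3 k A2 B2 C2 \<and>
     theta_matching_indices l1 l2 l3 k A3 B3 C3 \<and>
     A1 \<union> A2 \<union> A3 = {..<l1} \<and> B1 \<union> B2 \<union> B3 = {..<l2} \<and> C1 \<union> C2 \<union> C3 = {..<l3})"

lemma theta_matching_indices_swap12:
  "theta_matching_indices l1 l2 l3 k A B C \<Longrightarrow> theta_matching_indices l2 l1 l3 k B A C"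
  and theta_matching_indices_swap23:
  "theta_matching_indices l1 l2 l3 k A B C \<Longrightarrow> theta_matching_indices l1 l3 l2 k A C B"
  unfolding theta_matching_indices_def by auto

lemma theta_cover_scheme_swap12: "theta_cover_scheme l1 l2 l3 k \<Longrightarrow> theta_cover_scheme l2 l1 l3 k"
  and theta_cover_scheme_swap23: "theta_cover_scheme l1 l2 l3 k \<Longrightarrow> theta_cover_scheme l1 l3 l2 k"
  unfolding theta_cover_scheme_def
  by (metis theta_matching_indices_swap12, metis theta_matching_indices_swap23)

lemma theta_cover_scheme_odd_odd_odd:
  assumes "l1 = 2*p1 + 1" "l2 = 2*p2 + 1" "l3 = 2*p3 + 1" "p1 \<ge> 1" "p2 \<ge> 1" "p3 \<ge> 1"
  shows "theta_cover_scheme l1 l2 l3 (p1 + p2 + p3)"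
  unfolding theta_cover_scheme_def
proof (intro exI conjI)
  show "theta_matching_indices l1 l2 l3 (p1 + p2 + p3) (evens l1) (odds l2 - {1}) (odds l3)"
    "theta_matching_indices l1 l2 l3 (p1 + p2 + p3) (odds l1) (evens l2) (odds l3 - {1})"
    "theta_matching_indices l1 l2 l3 (p1 + p2 + p3) (odds l1 - {1}) (odds l2) (evens l3)"
    using assms unfolding theta_matching_indices_def
    by (auto simp: spaced_indices_Diff card_evens card_odds card_Diff_singleton)
qed auto

lemma theta_cover_scheme_1_odd_odd:
  assumes "l1 = 1" "l2 = 2*p2 + 1" "l3 = 2*p3 + 1" "p2 \<ge> 1" "p3 \<ge> 2"
  shows "theta_cover_scheme l1 l2 l3 (p2 + p3)"
  unfolding theta_cover_scheme_def
proof (intro exI conjI)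
  show "theta_matching_indices l1 l2 l3 (p2 + p3) (evens l1) (odds l2) (odds l3 - {3})"
    "theta_matching_indices l1 l2 l3 (p2 + p3) (odds l1) (evens l2) (odds l3 - {1})"
    "theta_matching_indices l1 l2 l3 (p2 + p3) (odds l1) (odds l2 - {1}) (evens l3)"
    using assms unfolding theta_matching_indices_def
    by (auto simp: spaced_indices_Diff card_evens card_odds card_Diff_singleton)
qed (use assms in auto)

lemma theta_cover_scheme_odd_even_even:
  assumes "l1 = 2*p1 + 1" "l2 = 2*p2" "l3 = 2*p3" "p1 \<ge> 1" "p2 \<ge> 1" "p3 \<ge> 2"
  shows "theta_cover_scheme l1 l2 l3 (p1 + p2 + p3 - 1)"
  unfolding theta_cover_scheme_def
proof (intro exI conjI)
  show "theta_matching_indices l1 l2 l3 (p1 + p2 + p3 - 1)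
      (evens l1) (odds l2 - {l2 - 1}) (odds l3 - {l3 - 1})"
    "theta_matching_indices l1 l2 l3 (p1 + p2 + p3 - 1) (odds l1) (evens l2) (odds l3 - {1})"
    "theta_matching_indices l1 l2 l3 (p1 + p2 + p3 - 1) (odds l1 - {1}) (odds l2) (evens l3)"
    using assms unfolding theta_matching_indices_def
    by (auto simp: spaced_indices_Diff card_evens card_odds card_Diff_singleton)
qed (use assms in auto)

lemma theta_cover_scheme_odd_2_2:
  assumes "l1 = 2*p1 + 1" "l2 = 2" "l3 = 2" "p1 \<ge> 2"
  shows "theta_cover_scheme l1 l2 l3 (p1 + 1)"
  unfolding theta_cover_scheme_def
proof (intro exI conjI)
  show "theta_matching_indices l1 l2 l3 (p1 + 1) (evens l1) {} {}"
    "theta_matching_indices l1 l2 l3 (p1 + 1) (odds l1 - {3}) (evens l2) (odds l3)"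
    "theta_matching_indices l1 l2 l3 (p1 + 1) (odds l1 - {1}) (odds l2) (evens l3)"
    using assms unfolding theta_matching_indices_def
    by (auto simp: spaced_indices_Diff spaced_indices_def card_evens card_odds card_Diff_singleton)
qed (use assms in auto)

lemma theta_cover_scheme_1_even_even:
  assumes "l1 = 1" "l2 = 2*p2" "l3 = 2*p3" "p2 \<ge> 2" "p3 \<ge> 2"
  shows "theta_cover_scheme l1 l2 l3 (p2 + p3 - 1)"
  unfolding theta_cover_scheme_def
proof (intro exI conjI)
  show "theta_matching_indices l1 l2 l3 (p2 + p3 - 1) (evens l1) (evens l2 - {0}) (evens l3 - {0})"
    "theta_matching_indices l1 l2 l3 (p2 + p3 - 1) (odds l1) (evens l2 - {2}) (odds l3)"
    "theta_matching_indices l1 l2 l3 (p2 + p3 - 1) (odds l1) (odds l2) (evens l3 - {2})"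
    using assms unfolding theta_matching_indices_def
    by (auto simp: spaced_indices_Diff card_evens card_odds card_Diff_singleton)
qed (use assms in auto)

lemma theta_cover_scheme_1_2_even:
  assumes "l1 = 1" "l2 = 2" "l3 = 2*p3" "p3 \<ge> 3"
  shows "theta_cover_scheme l1 l2 l3 p3"
  unfolding theta_cover_scheme_def
proof (intro exI conjI)
  have "card (odds l3 - {1} - {l3 - 1}) = p3 - 2"
    using assms by (simp add: card_odds)
  then show "theta_matching_indices l1 l2 l3 p3 (evens l1) {} (evens l3 - {0})"
    "theta_matching_indices l1 l2 l3 p3 (odds l1) (evens l2) (odds l3 - {3})"
    "theta_matching_indices l1 l2 l3 p3 (odds l1) (odds l2) (insert 0 (odds l3 - {1} - {l3 - 1}))"
    using assms unfolding theta_matching_indices_def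
    by (auto simp: spaced_indices_Diff spaced_indices_def card_evens card_odds card_Diff_singleton)
qed (use assms in auto)

lemma theta_cover_scheme_all_odd:
  assumes "odd l1" "odd l2" "odd l3" "l1 \<le> l2" "l2 \<le> l3" "l2 \<ge> 3"
    and "l1 + l2 + l3 = 2*n + 1" "n \<ge> 4"
  shows "theta_cover_scheme l1 l2 l3 (n - 1)"
proof -
  obtain p1 p2 p3 where l: "l1 = 2*p1 + 1" "l2 = 2*p2 + 1" "l3 = 2*p3 + 1"
    using assms(1-3) by (meson oddE)
  show ?thesis
  proof (cases "p1 = 0")
    case True
    have "n - 1 = p2 + p3" "p2 \<ge> 1" "p3 \<ge> 2" using assms l True by linarith+
    then show ?thesis using theta_cover_scheme_1_odd_odd[OF _ l(2,3)] l(1) True by simp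
  next
    case False
    have "n - 1 = p1 + p2 + p3" "p1 \<ge> 1" "p2 \<ge> 1" "p3 \<ge> 1"
      using assms l False by linarith+
    then show ?thesis using theta_cover_scheme_odd_odd_odd[OF l] by simp
  qed
qed

lemma theta_cover_scheme_odd_evens:
  assumes "odd l1" "even l2" "even l3" "l2 \<le> l3" "l2 \<ge> 1"
    and "l1 + l2 + l3 = 2*n + 1" "n \<ge> 4"
  shows "theta_cover_scheme l1 l2 l3 (n - 1)"
proof -
  obtain p1 p2 p3 where l: "l1 = 2*p1 + 1" "l2 = 2*p2" "l3 = 2*p3"
    using assms(1-3) by (meson oddE evenE)
  consider "p1 = 0" "p2 = 1" | "p1 = 0" "p2 \<noteq> 1" | "p1 \<noteq> 0" "p3 = 1" | "p1 \<noteq> 0" "p3 \<noteq> 1"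
    by blast
  then show ?thesis
  proof cases
    case 1
    have "n - 1 = p3" "p3 \<ge> 3" using assms l 1 by linarith+
    then show ?thesis using theta_cover_scheme_1_2_even[OF _ _ l(3)] l 1 by simp
  next
    case 2
    have "n - 1 = p2 + p3 - 1" "p2 \<ge> 2" "p3 \<ge> 2" using assms l 2 by linarith+
    then show ?thesis using theta_cover_scheme_1_even_even[OF _ l(2,3)] l 2 by simp
  next
    case 3
    have "n - 1 = p1 + 1" "p1 \<ge> 2" "p2 = 1" using assms l 3 by linarith+
    then show ?thesis using theta_cover_scheme_odd_2_2[OF l(1)] l 3 by simp
  next
    case 4
    have "n - 1 = p1 + p2 + p3 - 1" "p1 \<ge> 1" "p2 \<ge> 1" "p3 \<ge> 2" using assms l 4 by linarith+
    then show ?thesis using theta_cover_scheme_odd_even_even[OF l] by simp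
  qed
qed

lemma theta_cover_scheme_odd_first:
  assumes "odd l1" "odd l2 \<longrightarrow> l1 \<le> l2 \<and> l1 \<le> l3" "l1 \<ge> 1" "l2 \<ge> 1" "l3 \<ge> 1"
    and "\<not> (l1 = 1 \<and> l2 = 1)" "\<not> (l1 = 1 \<and> l3 = 1)"
    and sum: "l1 + l2 + l3 = 2*n + 1" and "n \<ge> 4"
  shows "theta_cover_scheme l1 l2 l3 (n - 1)"
proof (cases "odd l2")
  case True
  have "odd l3" using sum \<open>odd l1\<close> True by presburger
  have "l2 \<noteq> 1" "l3 \<noteq> 1" using assms(2,3,6,7) True by auto
  then have "l2 \<ge> 3" "l3 \<ge> 3" using assms(4,5) True \<open>odd l3\<close> by presburger+
  show ?thesis
  proof (cases "l2 \<le> l3")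
    case True
    then show ?thesis using assms \<open>odd l2\<close> \<open>odd l3\<close> \<open>l2 \<ge> 3\<close>
      by (intro theta_cover_scheme_all_odd) auto
  next
    case False
    then have "theta_cover_scheme l1 l3 l2 (n - 1)"
      using assms \<open>odd l2\<close> \<open>odd l3\<close> \<open>l3 \<ge> 3\<close> by (intro theta_cover_scheme_all_odd) auto
    then show ?thesis by (rule theta_cover_scheme_swap23)
  qed
next
  case False
  then have "even l2" by simp
  then have "even l3" using sum \<open>odd l1\<close> by presburger
  show ?thesis
  proof (cases "l2 \<le> l3")
    case True
    then show ?thesis
      using assms \<open>even l2\<close> \<open>even l3\<close> by (intro theta_cover_scheme_odd_evens) auto
  next
    case False
    then have "theta_cover_scheme l1 l3 l2 (n - 1)"
      using assms \<open>even l2\<close> \<open>even l3\<close> by (intro theta_cover_scheme_odd_evens) auto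
    then show ?thesis by (rule theta_cover_scheme_swap23)
  qed
qed

lemma theta_cover_scheme_exists:
  assumes "l1 \<ge> 1" "l2 \<ge> 1" "l3 \<ge> 1"
    and "\<not> (l1 = 1 \<and> l2 = 1)" "\<not> (l1 = 1 \<and> l3 = 1)" "\<not> (l2 = 1 \<and> l3 = 1)"
    and "l1 + l2 + l3 = 2*n + 1" "n \<ge> 4"
  shows "theta_cover_scheme l1 l2 l3 (n - 1)"
proof -
  have "(odd l1 \<and> (odd l2 \<longrightarrow> l1 \<le> l2 \<and> l1 \<le> l3)) \<or>
        (odd l2 \<and> (odd l1 \<longrightarrow> l2 \<le> l1 \<and> l2 \<le> l3)) \<or>
        (odd l3 \<and> (odd l2 \<longrightarrow> l3 \<le> l2 \<and> l3 \<le> l1))"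
  proof -
    have "odd l1 \<or> odd l2 \<or> odd l3" "odd l1 \<Longrightarrow> odd l2 \<longleftrightarrow> odd l3"
      "odd l2 \<Longrightarrow> odd l1 \<longleftrightarrow> odd l3"
      using assms(7) by presburger+
    then show ?thesis by linarith
  qed
  then show ?thesis
  proof (elim disjE)
    assume "odd l1 \<and> (odd l2 \<longrightarrow> l1 \<le> l2 \<and> l1 \<le> l3)"
    then show ?thesis using assms by (intro theta_cover_scheme_odd_first) auto
  next
    assume "odd l2 \<and> (odd l1 \<longrightarrow> l2 \<le> l1 \<and> l2 \<le> l3)"
    then have "theta_cover_scheme l2 l1 l3 (n - 1)"
      using assms by (intro theta_cover_scheme_odd_first) auto
    then show ?thesis by (rule theta_cover_scheme_swap12)
  next
    assume "odd l3 \<and> (odd l2 \<longrightarrow> l3 \<le> l2 \<and> l3 \<le> l1)"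
    then have "theta_cover_scheme l3 l2 l1 (n - 1)"
      using assms by (intro theta_cover_scheme_odd_first) auto
    then show ?thesis by (metis theta_cover_scheme_swap12 theta_cover_scheme_swap23)
  qed
qed

subsection \<open>Cubic graphs and covers by matchings\<close>

lemma simple_graph_edge_subset:
  assumes "simple_graph V E" "e \<in> E" shows "e \<subseteq> V"
proof -
  obtain u w where "e = {u, w}" "u \<in> V" "w \<in> V"
    using assms unfolding simple_graph_def by meson
  then show ?thesis by simp
qed

lemma simple_graph_finite_edges:
  assumes "simple_graph V E" shows "finite E"
proof -
  have "E \<subseteq> Pow V" using simple_graph_edge_subset[OF assms] by blast
  moreover have "finite V" using assms unfolding simple_graph_def by simp
  ultimately show ?thesis by (meson finite_Pow_iff finite_subset)
qed

lemma simple_graph_card_edge_vertices: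
  assumes "simple_graph V E" "e \<in> E" shows "card {v\<in>V. v \<in> e} = 2"
proof -
  obtain u w where "e = {u, w}" "u \<noteq> w" "u \<in> V" "w \<in> V"
    using assms unfolding simple_graph_def by meson
  then have "{v\<in>V. v \<in> e} = {u, w}" by auto
  then show ?thesis using \<open>u \<noteq> w\<close> by simp
qed

lemma cubic_card_edges:
  assumes "cubic V E" shows "2 * card E = 3 * card V"
proof -
  have G: "simple_graph V E" "finite V" "finite E"
    using assms simple_graph_finite_edges by (auto simp: cubic_def simple_graph_def)
  have "3 * card V = (\<Sum>v\<in>V. degree E v)"
    using assms by (simp add: cubic_def)
  also have "\<dots> = (\<Sum>v\<in>V. \<Sum>e\<in>E. if v \<in> e then 1 else 0)"
    unfolding degree_def by (simp add: sum.inter_filter[OF G(3), symmetric])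
  also have "\<dots> = (\<Sum>e\<in>E. \<Sum>v\<in>V. if v \<in> e then 1 else 0)"
    by (rule sum.swap)
  also have "\<dots> = (\<Sum>e\<in>E. 2)"
    using simple_graph_card_edge_vertices[OF G(1)] by (simp add: sum.inter_filter[OF G(2), symmetric])
  finally show ?thesis by simp
qed

text \<open>A vertex of degree three lying on two edges of \<open>P\<close> lies on at most one edge outside \<open>P\<close>.\<close>

lemma cubic_matching_complement:
  assumes "cubic V E" "P \<subseteq> E"
    and two: "\<And>v. v \<in> V \<Longrightarrow> \<exists>e1\<in>P. \<exists>e2\<in>P. e1 \<noteq> e2 \<and> v \<in> e1 \<and> v \<in> e2"
  shows "matching E (E - P)"
  unfolding matching_def
proof (intro conjI ballI impI)
  fix f1 f2 assume f: "f1 \<in> E - P" "f2 \<in> E - P" "f1 \<noteq> f2"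
  show "f1 \<inter> f2 = {}"
  proof (rule ccontr)
    assume "f1 \<inter> f2 \<noteq> {}"
    then obtain v where v: "v \<in> f1" "v \<in> f2" by blast
    have "f1 \<subseteq> V" using simple_graph_edge_subset[of V E f1] assms(1) f(1) by (simp add: cubic_def)
    then have "v \<in> V" using v(1) by blast
    then obtain e1 e2 where e: "e1 \<in> P" "e2 \<in> P" "e1 \<noteq> e2" "v \<in> e1" "v \<in> e2"
      using two by blast
    have sub: "{e1, e2, f1, f2} \<subseteq> {e\<in>E. v \<in> e}" using e f v assms(2) by auto
    have "e1 \<noteq> f1" "e1 \<noteq> f2" "e2 \<noteq> f1" "e2 \<noteq> f2" using e(1,2) f(1,2) by blast+
    then have "card {e1, e2, f1, f2} = 4" using e(3) f(3) by simp
    moreover have "finite {e\<in>E. v \<in> e}"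
      using assms(1) simple_graph_finite_edges[of V E] unfolding cubic_def by simp
    ultimately have "4 \<le> degree E v" unfolding degree_def using card_mono[OF _ sub] by simp
    then show False using assms(1) \<open>v \<in> V\<close> by (simp add: cubic_def)
  qed
qed simp

lemma card_le_card_matching_cover:
  assumes "finite S" "\<forall>M\<in>S. k_matching E k M" "\<Union>S = E"
  shows "card E \<le> card S * k"
proof -
  have "card E \<le> (\<Sum>M\<in>S. card M)" using card_Union_le_sum_card[of S] assms(3) by simp
  also have "\<dots> = (\<Sum>M\<in>S. k)" using assms(2) by (intro sum.cong) (auto simp: k_matching_def)
  also have "\<dots> = card S * k" by simp
  finally show ?thesis .
qed

lemma excessive_index_eqI:
  assumes "finite S" "\<forall>M\<in>S. k_matching E k M" "\<Union>S = E"
    and least: "\<And>T. finite T \<Longrightarrow> \<forall>M\<in>T. k_matching E k M \<Longrightarrow> \<Union>T = E \<Longrightarrow> card S \<le> card T"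
  shows "excessive_index E k = card S"
proof -
  let ?X = "{enat (card T) |T. finite T \<and> (\<forall>M\<in>T. k_matching E k M) \<and> \<Union>T = E}"
  have "enat (card S) \<in> ?X"
    unfolding mem_Collect_eq by (intro exI[of _ S]) (simp add: assms(1-3))
  moreover have "enat (card S) \<le> x" if x: "x \<in> ?X" for x
  proof -
    obtain T where "x = enat (card T)" "finite T" "\<forall>M\<in>T. k_matching E k M" "\<Union>T = E"
      using x by blast
    then show ?thesis using least by simp
  qed
  ultimately have "Inf ?X = enat (card S)"
    by (intro antisym Inf_lower Inf_greatest) auto
  then show ?thesis unfolding excessive_index_def .
qed

lemma matching_Un:
  assumes "matching E M" "matching E N" "\<forall>x\<in>M. \<forall>y\<in>N. x \<inter> y = {}"
  shows "matching E (M \<union> N)"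
  unfolding matching_def
proof (intro conjI ballI impI)
  show "M \<union> N \<subseteq> E" using assms(1,2) by (simp add: matching_def)
  fix e1 e2 assume "e1 \<in> M \<union> N" "e2 \<in> M \<union> N" "e1 \<noteq> e2"
  then show "e1 \<inter> e2 = {}" using assms unfolding matching_def by (metis Int_commute Un_iff)
qed

subsection \<open>Edges along a path\<close>

definition path_edge :: "'a list \<Rightarrow> nat \<Rightarrow> 'a set" where
  "path_edge Q j = {Q ! j, Q ! Suc j}"

context
  fixes E :: "'a set set" and a b :: 'a and Q :: "'a list"
  assumes path: "is_path E Q a b" and ends_distinct: "a \<noteq> b"
begin

lemma path_length_ge_2: "length Q \<ge> 2"
proof -
  obtain x xs where Q: "Q = x # xs" "hd Q = a" "last Q = b"
    using path unfolding is_path_def by (cases Q) auto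
  then show ?thesis using ends_distinct by (cases xs) auto
qed

lemma path_nth_eq_start_iff: "j < length Q \<Longrightarrow> Q ! j = a \<longleftrightarrow> j = 0"
  using path nth_eq_iff_index_eq[of Q j 0] unfolding is_path_def by (auto simp: hd_conv_nth)

lemma path_nth_eq_end_iff: "j < length Q \<Longrightarrow> Q ! j = b \<longleftrightarrow> j = length Q - 1"
  using path nth_eq_iff_index_eq[of Q j "length Q - 1"] unfolding is_path_def
  by (auto simp: last_conv_nth)

lemma path_edge_in_edges: "j < length Q - 1 \<Longrightarrow> path_edge Q j \<in> E"
  using path by (auto simp: is_path_def path_edge_def)

lemma path_edge_subset: "j < length Q - 1 \<Longrightarrow> path_edge Q j \<subseteq> set Q"
  by (auto simp: path_edge_def)

lemma inj_on_path_edge: "inj_on (path_edge Q) {..<length Q - 1}"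
  using path unfolding inj_on_def is_path_def
  by (auto simp: path_edge_def doubleton_eq_iff nth_eq_iff_index_eq)

lemma path_edges_disjoint:
  "j < length Q - 1 \<Longrightarrow> j' < length Q - 1 \<Longrightarrow> j \<noteq> j' \<Longrightarrow> Suc j \<noteq> j' \<Longrightarrow> j \<noteq> Suc j'
   \<Longrightarrow> path_edge Q j \<inter> path_edge Q j' = {}"
  using path by (auto simp: is_path_def path_edge_def nth_eq_iff_index_eq)

lemma start_in_path_edge_iff:
  assumes "j < length Q - 1" shows "a \<in> path_edge Q j \<longleftrightarrow> j = 0"
proof -
  have "Q ! j = a \<longleftrightarrow> j = 0" "Q ! Suc j \<noteq> a"
    using assms path_nth_eq_start_iff[of j] path_nth_eq_start_iff[of "Suc j"] by auto
  then show ?thesis unfolding path_edge_def by blast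
qed

lemma end_in_path_edge_iff:
  assumes "j < length Q - 1" shows "b \<in> path_edge Q j \<longleftrightarrow> j = length Q - 2"
proof -
  have "Q ! j \<noteq> b" "Q ! Suc j = b \<longleftrightarrow> j = length Q - 2"
    using assms path_nth_eq_end_iff[of j] path_nth_eq_end_iff[of "Suc j"] by auto
  then show ?thesis unfolding path_edge_def by blast
qed

lemma path_length_2_eq: "length Q = 2 \<Longrightarrow> Q = [a, b]"
proof -
  assume "length Q = 2"
  then obtain x y where "Q = [x, y]"
    by (metis One_nat_def Suc_1 length_0_conv length_Suc_conv)
  then show "Q = [a, b]" using path by (simp add: is_path_def)
qed

lemma path_eq_if_edge_subset_ends: "j < length Q - 1 \<Longrightarrow> path_edge Q j \<subseteq> {a, b} \<Longrightarrow> Q = [a, b]"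
proof -
  assume j: "j < length Q - 1" and sub: "path_edge Q j \<subseteq> {a, b}"
  have "Q ! j = a" "Q ! Suc j = b"
    using sub j path_nth_eq_start_iff[of "Suc j"] path_nth_eq_end_iff[of j]
    by (auto simp: path_edge_def)
  then have "j = 0" "Suc j = length Q - 1"
    using j path_nth_eq_start_iff[of j] path_nth_eq_end_iff[of "Suc j"] by auto
  then show "Q = [a, b]" using path_length_2_eq by simp
qed

lemma interior_vertex_in_two_path_edges:
  assumes "v \<in> set Q" "v \<noteq> a" "v \<noteq> b"
  shows "\<exists>e1\<in>path_edge Q ` {..<length Q - 1}. \<exists>e2\<in>path_edge Q ` {..<length Q - 1}.
    e1 \<noteq> e2 \<and> v \<in> e1 \<and> v \<in> e2"
proof -
  obtain j where j: "j < length Q" "Q ! j = v" using assms(1) by (auto simp: in_set_conv_nth)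
  have "j \<noteq> 0" "j \<noteq> length Q - 1"
    using path_nth_eq_start_iff path_nth_eq_end_iff j assms(2,3) by auto
  then have idx: "j - 1 < length Q - 1" "j < length Q - 1"
    and "v \<in> path_edge Q (j - 1)" "v \<in> path_edge Q j"
    using j by (auto simp: path_edge_def)
  moreover have "path_edge Q (j - 1) \<noteq> path_edge Q j"
    using inj_onD[OF inj_on_path_edge, of "j - 1" j] idx \<open>j \<noteq> 0\<close> by auto
  ultimately show ?thesis using idx by blast
qed

lemma card_path_edges: "A \<subseteq> {..<length Q - 1} \<Longrightarrow> card (path_edge Q ` A) = card A"
  using inj_on_path_edge by (metis card_image inj_on_subset)

lemma matching_path_edges: "spaced_indices (length Q - 1) A \<Longrightarrow> matching E (path_edge Q ` A)"
  unfolding matching_def spaced_indices_def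
  using path_edge_in_edges path_edges_disjoint by blast

end

lemma path_edges_disjoint_across:
  assumes Q: "is_path E Q a b" and R: "is_path E R a b" and "a \<noteq> b"
    and QR: "set Q \<inter> set R = {a, b}"
    and j: "j < length Q - 1" and j': "j' < length R - 1"
    and "\<not> (j = 0 \<and> j' = 0)" "\<not> (j = length Q - 2 \<and> j' = length R - 2)"
  shows "path_edge Q j \<inter> path_edge R j' = {}"
proof (rule ccontr)
  assume "path_edge Q j \<inter> path_edge R j' \<noteq> {}"
  then obtain x where x: "x \<in> path_edge Q j" "x \<in> path_edge R j'" by blast
  then have "x = a \<or> x = b"
    using path_edge_subset[OF Q \<open>a \<noteq> b\<close> j] path_edge_subset[OF R \<open>a \<noteq> b\<close> j'] QR by blast
  then show False
    using x assms(7,8) start_in_path_edge_iff[OF Q \<open>a \<noteq> b\<close> j] start_in_path_edge_iff[OF R \<open>a \<noteq> b\<close> j']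
      end_in_path_edge_iff[OF Q \<open>a \<noteq> b\<close> j] end_in_path_edge_iff[OF R \<open>a \<noteq> b\<close> j'] by auto
qed

lemma path_edges_neq_across:
  assumes Q: "is_path E Q a b" and R: "is_path E R a b" and "a \<noteq> b"
    and "set Q \<inter> set R = {a, b}" and "Q \<noteq> R"
    and j: "j < length Q - 1" and j': "j' < length R - 1"
  shows "path_edge Q j \<noteq> path_edge R j'"
proof
  assume eq: "path_edge Q j = path_edge R j'"
  have "path_edge Q j \<subseteq> set Q \<inter> set R"
    using eq path_edge_subset[OF Q \<open>a \<noteq> b\<close> j] path_edge_subset[OF R \<open>a \<noteq> b\<close> j'] by simp
  then have "path_edge Q j \<subseteq> {a, b}" "path_edge R j' \<subseteq> {a, b}"
    using eq assms(4) by simp_all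
  then show False
    using path_eq_if_edge_subset_ends[OF Q \<open>a \<noteq> b\<close> j] path_eq_if_edge_subset_ends[OF R \<open>a \<noteq> b\<close> j'] \<open>Q \<noteq> R\<close>
    by simp
qed

lemma path_edge_images_disjoint:
  assumes Q: "is_path E Q a b" and R: "is_path E R a b" and ab: "a \<noteq> b"
    and QR: "set Q \<inter> set R = {a, b}"
    and A: "spaced_indices (length Q - 1) A" and B: "spaced_indices (length R - 1) B"
    and first: "\<not> (0 \<in> A \<and> 0 \<in> B)" and last: "\<not> (length Q - 1 - 1 \<in> A \<and> length R - 1 - 1 \<in> B)"
  shows "\<forall>x\<in>path_edge Q ` A. \<forall>y\<in>path_edge R ` B. x \<inter> y = {}"
proof (intro ballI)
  fix x y assume "x \<in> path_edge Q ` A" "y \<in> path_edge R ` B"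
  then obtain j j' where jj: "j \<in> A" "j' \<in> B" "x = path_edge Q j" "y = path_edge R j'" by auto
  have j: "j < length Q - 1" "j' < length R - 1" using A B jj unfolding spaced_indices_def by auto
  have "\<not> (j = 0 \<and> j' = 0)" using first jj by blast
  moreover have "\<not> (j = length Q - 2 \<and> j' = length R - 2)"
    using last jj by (metis diff_diff_left one_add_one)
  ultimately show "x \<inter> y = {}"
    using path_edges_disjoint_across[OF Q R ab QR j] jj by simp
qed

subsection \<open>Theta graphs\<close>

locale theta =
  fixes E :: "'a set set" and a b :: 'a and Q1 Q2 Q3 :: "'a list"
  assumes ends_distinct: "a \<noteq> b"
    and path1: "is_path E Q1 a b" and path2: "is_path E Q2 a b" and path3: "is_path E Q3 a b"
    and inter12: "set Q1 \<inter> set Q2 = {a, b}" and inter13: "set Q1 \<inter> set Q3 = {a, b}"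
    and inter23: "set Q2 \<inter> set Q3 = {a, b}"
    and neq12: "Q1 \<noteq> Q2" and neq13: "Q1 \<noteq> Q3" and neq23: "Q2 \<noteq> Q3"
begin

definition theta_edges :: "nat set \<Rightarrow> nat set \<Rightarrow> nat set \<Rightarrow> 'a set set" where
  "theta_edges A B C = path_edge Q1 ` A \<union> path_edge Q2 ` B \<union> path_edge Q3 ` C"

abbreviation all_theta_edges :: "'a set set" where
  "all_theta_edges \<equiv> theta_edges {..<length Q1 - 1} {..<length Q2 - 1} {..<length Q3 - 1}"

lemma all_theta_edges_subset: "all_theta_edges \<subseteq> E"
  unfolding theta_edges_def
  using path_edge_in_edges[OF path1 ends_distinct] path_edge_in_edges[OF path2 ends_distinct]
    path_edge_in_edges[OF path3 ends_distinct] by blast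

lemma card_theta_edges:
  assumes "A \<subseteq> {..<length Q1 - 1}" "B \<subseteq> {..<length Q2 - 1}" "C \<subseteq> {..<length Q3 - 1}"
  shows "card (theta_edges A B C) = card A + card B + card C"
proof -
  have fin: "finite A" "finite B" "finite C" using assms finite_subset by blast+
  have "path_edge Q1 ` A \<inter> path_edge Q2 ` B = {}"
    using path_edges_neq_across[OF path1 path2 ends_distinct inter12 neq12] assms by blast
  moreover have "(path_edge Q1 ` A \<union> path_edge Q2 ` B) \<inter> path_edge Q3 ` C = {}"
    using path_edges_neq_across[OF path1 path3 ends_distinct inter13 neq13]
      path_edges_neq_across[OF path2 path3 ends_distinct inter23 neq23] assms by blast
  ultimately have "card (theta_edges A B C) =
      card (path_edge Q1 ` A) + card (path_edge Q2 ` B) + card (path_edge Q3 ` C)"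
    unfolding theta_edges_def using fin by (simp add: card_Un_disjoint)
  then show ?thesis
    using card_path_edges[OF path1 ends_distinct assms(1)] card_path_edges[OF path2 ends_distinct assms(2)]
      card_path_edges[OF path3 ends_distinct assms(3)] by simp
qed

lemma matching_theta_edges:
  assumes "theta_matching_indices (length Q1 - 1) (length Q2 - 1) (length Q3 - 1) k A B C"
  shows "k_matching E k (theta_edges A B C)"
proof -
  have A: "spaced_indices (length Q1 - 1) A" and B: "spaced_indices (length Q2 - 1) B"
    and C: "spaced_indices (length Q3 - 1) C"
    using assms unfolding theta_matching_indices_def by auto
  have disj12: "\<forall>x\<in>path_edge Q1 ` A. \<forall>y\<in>path_edge Q2 ` B. x \<inter> y = {}"
    and disj13: "\<forall>x\<in>path_edge Q1 ` A. \<forall>y\<in>path_edge Q3 ` C. x \<inter> y = {}"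
    and disj23: "\<forall>x\<in>path_edge Q2 ` B. \<forall>y\<in>path_edge Q3 ` C. x \<inter> y = {}"
    using path_edge_images_disjoint[OF path1 path2 ends_distinct inter12 A B]
      path_edge_images_disjoint[OF path1 path3 ends_distinct inter13 A C]
      path_edge_images_disjoint[OF path2 path3 ends_distinct inter23 B C] assms
    unfolding theta_matching_indices_def by simp_all
  have "matching E (path_edge Q1 ` A \<union> path_edge Q2 ` B)"
    by (rule matching_Un[OF matching_path_edges[OF path1 ends_distinct A]
          matching_path_edges[OF path2 ends_distinct B] disj12])
  then have "matching E (theta_edges A B C)"
    unfolding theta_edges_def
    by (rule matching_Un[OF _ matching_path_edges[OF path3 ends_distinct C]])
      (use disj13 disj23 in blast)
  moreover have "card (theta_edges A B C) = k"
    using card_theta_edges A B C assms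
    unfolding spaced_indices_def theta_matching_indices_def by auto
  ultimately show ?thesis by (simp add: k_matching_def)
qed

lemma all_theta_edges_matching_cover:
  assumes "theta_cover_scheme (length Q1 - 1) (length Q2 - 1) (length Q3 - 1) k"
  shows "\<exists>M1 M2 M3. k_matching E k M1 \<and> k_matching E k M2 \<and> k_matching E k M3 \<and>
    M1 \<union> M2 \<union> M3 = all_theta_edges"
proof -
  obtain A1 B1 C1 A2 B2 C2 A3 B3 C3 where
    "theta_matching_indices (length Q1 - 1) (length Q2 - 1) (length Q3 - 1) k A1 B1 C1"
    "theta_matching_indices (length Q1 - 1) (length Q2 - 1) (length Q3 - 1) k A2 B2 C2"
    "theta_matching_indices (length Q1 - 1) (length Q2 - 1) (length Q3 - 1) k A3 B3 C3"
    and cover: "A1 \<union> A2 \<union> A3 = {..<length Q1 - 1}" "B1 \<union> B2 \<union> B3 = {..<length Q2 - 1}"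
      "C1 \<union> C2 \<union> C3 = {..<length Q3 - 1}"
    using assms unfolding theta_cover_scheme_def by blast
  moreover have "theta_edges A1 B1 C1 \<union> theta_edges A2 B2 C2 \<union> theta_edges A3 B3 C3 =
      theta_edges (A1 \<union> A2 \<union> A3) (B1 \<union> B2 \<union> B3) (C1 \<union> C2 \<union> C3)"
    unfolding theta_edges_def image_Un by (simp only: Un_ac)
  ultimately show ?thesis using matching_theta_edges by (metis cover)
qed

lemma path_edges_subset_all_theta_edges:
  "path_edge Q1 ` {..<length Q1 - 1} \<subseteq> all_theta_edges"
  "path_edge Q2 ` {..<length Q2 - 1} \<subseteq> all_theta_edges"
  "path_edge Q3 ` {..<length Q3 - 1} \<subseteq> all_theta_edges"
  unfolding theta_edges_def by auto

lemma end_vertex_in_two_theta_edges: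
  assumes "v = a \<or> v = b"
  shows "\<exists>e1\<in>all_theta_edges. \<exists>e2\<in>all_theta_edges. e1 \<noteq> e2 \<and> v \<in> e1 \<and> v \<in> e2"
proof -
  have first: "0 < length Q1 - 1" "0 < length Q2 - 1"
    using path_length_ge_2[OF path1 ends_distinct] path_length_ge_2[OF path2 ends_distinct] by auto
  then have last: "length Q1 - 2 < length Q1 - 1" "length Q2 - 2 < length Q2 - 1"
    by simp_all
  have in_theta: "path_edge Q1 j \<in> all_theta_edges" "path_edge Q2 j' \<in> all_theta_edges"
    if "j < length Q1 - 1" "j' < length Q2 - 1" for j j'
    using that path_edges_subset_all_theta_edges by blast+
  from assms show ?thesis
  proof
    assume "v = a"
    moreover have "path_edge Q1 0 \<noteq> path_edge Q2 0"
      using path_edges_neq_across[OF path1 path2 ends_distinct inter12 neq12 first] .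
    moreover have "a \<in> path_edge Q1 0" "a \<in> path_edge Q2 0"
      using start_in_path_edge_iff[OF path1 ends_distinct first(1)]
        start_in_path_edge_iff[OF path2 ends_distinct first(2)] by simp_all
    ultimately show ?thesis using in_theta[OF first] by blast
  next
    assume "v = b"
    moreover have "path_edge Q1 (length Q1 - 2) \<noteq> path_edge Q2 (length Q2 - 2)"
      using path_edges_neq_across[OF path1 path2 ends_distinct inter12 neq12 last] .
    moreover have "b \<in> path_edge Q1 (length Q1 - 2)" "b \<in> path_edge Q2 (length Q2 - 2)"
      using end_in_path_edge_iff[OF path1 ends_distinct last(1)]
        end_in_path_edge_iff[OF path2 ends_distinct last(2)] by simp_all
    ultimately show ?thesis using in_theta[OF last] by blast
  qed
qed

lemma vertex_in_two_theta_edges: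
  assumes "v \<in> set Q1 \<union> set Q2 \<union> set Q3"
  shows "\<exists>e1\<in>all_theta_edges. \<exists>e2\<in>all_theta_edges. e1 \<noteq> e2 \<and> v \<in> e1 \<and> v \<in> e2"
proof (cases "v = a \<or> v = b")
  case True
  then show ?thesis by (rule end_vertex_in_two_theta_edges)
next
  case False
  have lift: "\<exists>e1\<in>B. \<exists>e2\<in>B. e1 \<noteq> e2 \<and> v \<in> e1 \<and> v \<in> e2"
    if "\<exists>e1\<in>A. \<exists>e2\<in>A. e1 \<noteq> e2 \<and> v \<in> e1 \<and> v \<in> e2" "A \<subseteq> B" for A B :: "'a set set"
    using that by blast
  from assms consider "v \<in> set Q1" | "v \<in> set Q2" | "v \<in> set Q3" by blast
  then show ?thesis
  proof cases
    case 1
    with False show ?thesis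
      using lift[OF interior_vertex_in_two_path_edges[OF path1 ends_distinct]
          path_edges_subset_all_theta_edges(1)] by blast
  next
    case 2
    with False show ?thesis
      using lift[OF interior_vertex_in_two_path_edges[OF path2 ends_distinct]
          path_edges_subset_all_theta_edges(2)] by blast
  next
    case 3
    with False show ?thesis
      using lift[OF interior_vertex_in_two_path_edges[OF path3 ends_distinct]
          path_edges_subset_all_theta_edges(3)] by blast
  qed
qed

lemma card_theta_vertices:
  "card (set Q1 \<union> set Q2 \<union> set Q3) + 4 = length Q1 + length Q2 + length Q3"
proof -
  have len: "card (set Q1) = length Q1" "card (set Q2) = length Q2" "card (set Q3) = length Q3"
    using path1 path2 path3 by (simp_all add: is_path_def distinct_card)
  have "card (set Q1 \<union> set Q2) + 2 = length Q1 + length Q2"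
    using card_Un_Int[of "set Q1" "set Q2"] inter12 ends_distinct len by simp
  moreover have "(set Q1 \<union> set Q2) \<inter> set Q3 = {a, b}" using inter13 inter23 by blast
  ultimately show ?thesis
    using card_Un_Int[of "set Q1 \<union> set Q2" "set Q3"] ends_distinct len by simp
qed

lemma card_all_theta_edges:
  "card all_theta_edges = card (set Q1 \<union> set Q2 \<union> set Q3) + 1"
proof -
  have "card all_theta_edges = (length Q1 - 1) + (length Q2 - 1) + (length Q3 - 1)"
    using card_theta_edges[OF order_refl order_refl order_refl] by simp
  then show ?thesis
    using card_theta_vertices path_length_ge_2[OF path1 ends_distinct]
      path_length_ge_2[OF path2 ends_distinct] path_length_ge_2[OF path3 ends_distinct]
    by arith
qed

lemma theta_cover_scheme_path_lengths:
  assumes "card (set Q1 \<union> set Q2 \<union> set Q3) = 2 * n" "n \<ge> 4"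
  shows "theta_cover_scheme (length Q1 - 1) (length Q2 - 1) (length Q3 - 1) (n - 1)"
proof (rule theta_cover_scheme_exists)
  show "length Q1 - 1 \<ge> 1" "length Q2 - 1 \<ge> 1" "length Q3 - 1 \<ge> 1"
    using path_length_ge_2[OF path1 ends_distinct] path_length_ge_2[OF path2 ends_distinct]
      path_length_ge_2[OF path3 ends_distinct] by auto
  have "Q = [a, b]" if "is_path E Q a b" "length Q - 1 = 1" for Q
    using path_length_2_eq[OF that(1) ends_distinct] path_length_ge_2[OF that(1) ends_distinct] that(2)
    by simp
  then show "\<not> (length Q1 - 1 = 1 \<and> length Q2 - 1 = 1)" "\<not> (length Q1 - 1 = 1 \<and> length Q3 - 1 = 1)"
    "\<not> (length Q2 - 1 = 1 \<and> length Q3 - 1 = 1)"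
    using path1 path2 path3 neq12 neq13 neq23 by metis+
  show "length Q1 - 1 + (length Q2 - 1) + (length Q3 - 1) = 2 * n + 1"
    using card_theta_vertices assms(1) path_length_ge_2[OF path1 ends_distinct]
      path_length_ge_2[OF path2 ends_distinct] path_length_ge_2[OF path3 ends_distinct] by arith
qed (use assms in simp)

lemma cubic_theta_matching_cover:
  assumes "cubic V E" "V = set Q1 \<union> set Q2 \<union> set Q3" "card V = 2 * n" "n \<ge> 4"
  shows "\<exists>S. finite S \<and> card S \<le> 4 \<and> (\<forall>M\<in>S. k_matching E (n - 1) M) \<and> \<Union>S = E"
proof -
  obtain M1 M2 M3 where M: "k_matching E (n - 1) M1" "k_matching E (n - 1) M2" "k_matching E (n - 1) M3"
    and cover: "M1 \<union> M2 \<union> M3 = all_theta_edges"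
    using all_theta_edges_matching_cover theta_cover_scheme_path_lengths assms(2-4) by blast
  have "matching E (E - all_theta_edges)"
    using cubic_matching_complement[OF assms(1) all_theta_edges_subset] vertex_in_two_theta_edges assms(2)
    by blast
  moreover have "card (E - all_theta_edges) = n - 1"
  proof -
    have "finite E" using assms(1) simple_graph_finite_edges[of V E] by (simp add: cubic_def)
    then show ?thesis
      using card_Diff_subset[OF finite_subset[OF all_theta_edges_subset] all_theta_edges_subset]
        cubic_card_edges[OF assms(1)] card_all_theta_edges assms(2,3) by simp
  qed
  ultimately have M0: "k_matching E (n - 1) (E - all_theta_edges)" by (simp add: k_matching_def)
  let ?S = "{E - all_theta_edges, M1, M2, M3}"
  have "card ?S \<le> 4" using card_length[of "[E - all_theta_edges, M1, M2, M3]"] by simp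
  moreover have "\<Union>?S = E" using cover all_theta_edges_subset by auto
  ultimately show ?thesis using M M0 by (intro exI[of _ ?S]) auto
qed

end

lemma three_star_connected_obtains_theta:
  assumes "three_star_connected V E"
  obtains a b Q1 Q2 Q3 where "theta E a b Q1 Q2 Q3" "V = set Q1 \<union> set Q2 \<union> set Q3"
proof -
  obtain a b Q1 Q2 Q3 where "a \<noteq> b" "is_path E Q1 a b" "is_path E Q2 a b" "is_path E Q3 a b"
    "Q1 \<noteq> Q2" "Q1 \<noteq> Q3" "Q2 \<noteq> Q3"
    "set Q1 \<inter> set Q2 = {a, b}" "set Q1 \<inter> set Q3 = {a, b}" "set Q2 \<inter> set Q3 = {a, b}"
    and "V = set Q1 \<union> set Q2 \<union> set Q3"
    using assms unfolding three_star_connected_def by blast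
  then show ?thesis using that[of a b Q1 Q2 Q3] by (simp add: theta_def)
qed

theorem proposition8:
  fixes V :: "'a set" and E :: "'a set set" and n :: nat
  assumes "cubic V E" and "connected_graph V E" and "three_star_connected V E"
    and "card V = 2 * n" and "n \<ge> 4"
  shows "excessive_index E (n - 1) = 4"
proof -
  obtain a b Q1 Q2 Q3 where theta: "theta E a b Q1 Q2 Q3" and V: "V = set Q1 \<union> set Q2 \<union> set Q3"
    using three_star_connected_obtains_theta[OF assms(3)] .
  obtain S where S: "finite S" "card S \<le> 4" "\<forall>M\<in>S. k_matching E (n - 1) M" "\<Union>S = E"
    using theta.cubic_theta_matching_cover[OF theta assms(1) V assms(4,5)] by blast
  have card_E: "card E = 3 * n" using cubic_card_edges[OF assms(1)] assms(4) by simp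
  have at_least_4: "4 \<le> card T"
    if T: "finite T" "\<forall>M\<in>T. k_matching E (n - 1) M" "\<Union>T = E" for T
  proof (rule ccontr)
    assume "\<not> 4 \<le> card T"
    then have "card T * (n - 1) \<le> 3 * (n - 1)" by (intro mult_le_mono1) simp
    then have "3 * n \<le> 3 * (n - 1)" using card_le_card_matching_cover[OF T] card_E by linarith
    then show False using assms(5) by simp
  qed
  have "card S = 4" using at_least_4[OF S(1,3,4)] S(2) by simp
  then show ?thesis
    using excessive_index_eqI[OF S(1,3,4)] at_least_4 by (simp add: numeral_eq_enat)
qed

end
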